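(* Let $n\ge2$, $B^n=\{x\in\mathbb R^n:|x|<1\}$, and let $F$ be the Funk metric $$F(x,y)=\frac{\sqrt{|y|^2-(|x|^2|y|^2-\langle x,y\rangle^2)}}{1-|x|^2}+\frac{\langle x,y\rangle}{1-|x|^2},\quad x\in B^n,\ y\in\mathbb R^n,$$ with induced distance $d_F$ and Busemann–Hausdorff measure $\mu$ (which equals Lebesgue measure). Then: (a) ${\sf A}^\mu_\rho(0)=n\omega_n(1-e^{-\rho})^{n-1}e^{-\rho}$ for $\rho>0$, the hypothesis $(\mathbf D)^n_0$ holds, and $(\mathbf{BG})^{n,\kappa}_0$ holds for every $\kappa>0$; (b) $\lambda_{1,d_F}(B^n)=0$.
   Context: The co-metric is $F^*(x,\xi)=|\xi|-\langle x,\xi\rangle$, $d_F(0,x)=-\ln(1-|x|)$. For $u$ Lipschitz with compact support in open $\Omega$, $|\nabla u|_d(x)=\limsup_{y\to x}\frac{u(y)-u(x)}{d(x,y)}$ and $\lambda_{1,d}(\Omega)=\inf_{u\ne0}\int_\Omega|\nabla u|_d^2\,d\mu/\int_\Omega u^2\,d\mu$. $B_\rho(x_0)=\{y:d_F(x_0,y)<\rho\}$, ${\sf A}^\mu_\rho(x_0)=\limsup_{\delta\to0}\mu(B_{\rho+\delta}(x_0)\setminus B_\rho(x_0))/\delta$. $(\mathbf D)^n_{x_0}$: $\liminf_{\rho\to0}{\sf A}^\mu_\rho(x_0)/(n\omega_n\rho^{n-1})=1$, $\omega_n$ the volume of the Euclidean unit ball. $(\mathbf{BG})^{n,\kappa}_{x_0}$: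 $\rho\mapsto{\sf A}^\mu_\rho(x_0)/\sinh^{n-1}(\kappa\rho)$ is non-increasing on $(0,\infty)$. *)

theory Defs
  imports "HOL-Analysis.Analysis"
begin

definition funk_F :: "'a::euclidean_space \<Rightarrow> 'a \<Rightarrow> real" where
  "funk_F x y =
     sqrt ((norm y)\<^sup>2 - ((norm x)\<^sup>2 * (norm y)\<^sup>2 - (x \<bullet> y)\<^sup>2)) / (1 - (norm x)\<^sup>2)
     + (x \<bullet> y) / (1 - (norm x)\<^sup>2)"

definition finsler_length ::
  "('a::euclidean_space \<Rightarrow> 'a \<Rightarrow> real) \<Rightarrow> (real \<Rightarrow> 'a) \<Rightarrow> real" where
  "finsler_length F g = integral {0..1} (\<lambda>t. F (g t) (vector_derivative g (at t)))"

definition finsler_dist ::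
  "('a::euclidean_space \<Rightarrow> 'a \<Rightarrow> real) \<Rightarrow> 'a set \<Rightarrow> 'a \<Rightarrow> 'a \<Rightarrow> real" where
  "finsler_dist F \<Omega> x y = Inf {finsler_length F g | g.
       valid_path g \<and> path_image g \<subseteq> \<Omega> \<and> pathstart g = x \<and> pathfinish g = y \<and>
       (\<lambda>t. F (g t) (vector_derivative g (at t))) integrable_on {0..1}}"

definition unit_ball_vol :: "'a::euclidean_space itself \<Rightarrow> real" where
  "unit_ball_vol TYPE('a) = measure lborel (ball (0::'a) 1)"

definition busemann_hausdorff ::
  "('a::euclidean_space \<Rightarrow> 'a \<Rightarrow> real) \<Rightarrow> 'a set \<Rightarrow> 'a measure" where
  "busemann_hausdorff F \<Omega> = density lborel
     (\<lambda>x. indicator \<Omega> x * (emeasure lborel (ball (0::'a) 1) / emeasure lborel {y. F x y < 1}))"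

definition fball :: "('a \<Rightarrow> 'a \<Rightarrow> real) \<Rightarrow> 'a set \<Rightarrow> 'a \<Rightarrow> real \<Rightarrow> 'a set" where
  "fball d \<Omega> x0 \<rho> = {y \<in> \<Omega>. d x0 y < \<rho>}"

definition area_fn :: "'a measure \<Rightarrow> ('a \<Rightarrow> 'a \<Rightarrow> real) \<Rightarrow> 'a set \<Rightarrow> 'a \<Rightarrow> real \<Rightarrow> ereal" where
  "area_fn \<mu> d \<Omega> x0 \<rho> = Limsup (at_right 0)
     (\<lambda>\<delta>. enn2ereal (emeasure \<mu> (fball d \<Omega> x0 (\<rho> + \<delta>) - fball d \<Omega> x0 \<rho>)) / ereal \<delta>)"

definition hyp_D :: "nat \<Rightarrow> real \<Rightarrow> 'a measure \<Rightarrow> ('a \<Rightarrow> 'a \<Rightarrow> real) \<Rightarrow> 'a set \<Rightarrow> 'a \<Rightarrow> bool" where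
  "hyp_D n \<omega> \<mu> d \<Omega> x0 \<longleftrightarrow>
     Liminf (at_right 0) (\<lambda>\<rho>. area_fn \<mu> d \<Omega> x0 \<rho> / ereal (real n * \<omega> * \<rho> ^ (n - 1))) = 1"

definition hyp_BG :: "nat \<Rightarrow> real \<Rightarrow> 'a measure \<Rightarrow> ('a \<Rightarrow> 'a \<Rightarrow> real) \<Rightarrow> 'a set \<Rightarrow> 'a \<Rightarrow> bool" where
  "hyp_BG n \<kappa> \<mu> d \<Omega> x0 \<longleftrightarrow>
     (\<forall>\<rho>1 \<rho>2. 0 < \<rho>1 \<and> \<rho>1 \<le> \<rho>2 \<longrightarrow>
        area_fn \<mu> d \<Omega> x0 \<rho>2 / ereal (sinh (\<kappa> * \<rho>2) ^ (n - 1))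
        \<le> area_fn \<mu> d \<Omega> x0 \<rho>1 / ereal (sinh (\<kappa> * \<rho>1) ^ (n - 1)))"

definition metric_grad :: "('a::topological_space \<Rightarrow> 'a \<Rightarrow> real) \<Rightarrow> 'a set \<Rightarrow> ('a \<Rightarrow> real) \<Rightarrow> 'a \<Rightarrow> ereal" where
  "metric_grad d \<Omega> u x = Limsup (at x within \<Omega>) (\<lambda>y. ereal ((u y - u x) / d x y))"

definition lip_compact_supp :: "'a::metric_space set \<Rightarrow> ('a \<Rightarrow> real) \<Rightarrow> bool" where
  "lip_compact_supp \<Omega> u \<longleftrightarrow> (\<exists>L. L-lipschitz_on \<Omega> u) \<and>
     (\<exists>K. compact K \<and> K \<subseteq> \<Omega> \<and> (\<forall>x. x \<notin> K \<longrightarrow> u x = 0))"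

definition first_eigenvalue :: "('a::metric_space \<Rightarrow> 'a \<Rightarrow> real) \<Rightarrow> 'a measure \<Rightarrow> 'a set \<Rightarrow> ennreal" where
  "first_eigenvalue d \<mu> \<Omega> =
     (INF u \<in> {u. lip_compact_supp \<Omega> u \<and> (\<exists>x\<in>\<Omega>. u x \<noteq> 0)}.
        (\<integral>\<^sup>+x\<in>\<Omega>. e2ennreal ((metric_grad d \<Omega> u x)\<^sup>2) \<partial>\<mu>) /
        (\<integral>\<^sup>+x\<in>\<Omega>. ennreal ((u x)\<^sup>2) \<partial>\<mu>))"

end

theory Submission
  imports Defs
begin

text \<open>Put \<open>\<psi>(x) = -ln (1 - |x|)\<close> (\<open>funk_potential\<close>). Since \<open>F(x,y) \<ge> \<langle>sgn x, y\<rangle> / (1 - |x|) = d\<psi>\<^sub>x(y)\<close>,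
  every curve in the ball has Funk length at least the increase of \<open>\<psi>\<close> along it, with equality
  on rays from the origin. Hence \<open>d\<^sub>F(0,x) = \<psi>(x)\<close> and the forward balls about \<open>0\<close> are the
  Euclidean balls of radius \<open>1 - e\<^sup>-\<^sup>\<rho>\<close>. The indicatrix \<open>{y. F(x,y) < 1}\<close> is the unit ball
  translated by \<open>-x\<close>, so \<open>\<mu>\<close> is Lebesgue measure and \<open>A\<^sub>\<rho>(0)\<close> is the \<open>\<rho>\<close>-derivative of
  \<open>\<omega>\<^sub>n (1 - e\<^sup>-\<^sup>\<rho>)\<^sup>n\<close>; (D) and (BG) are then elementary calculus. For (b), the functions
  \<open>-h(\<psi>)\<close>, with \<open>h\<close> a cutoff equal to \<open>1\<close> on \<open>[0,S]\<close> and \<open>0\<close> beyond \<open>2S\<close>, have slope at most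
  \<open>1/S\<close> because \<open>d\<^sub>F(x,y) \<ge> \<psi>(y) - \<psi>(x)\<close>, while their \<open>L\<^sup>2\<close> mass on \<open>B(0,1/2)\<close> stays
  bounded below; so their Rayleigh quotients are \<open>O(S\<^sup>-\<^sup>2)\<close>.\<close>

abbreviation funk_dist :: "'a::euclidean_space \<Rightarrow> 'a \<Rightarrow> real"
  where "funk_dist \<equiv> finsler_dist funk_F (ball 0 1)"

abbreviation funk_measure :: "'a::euclidean_space measure"
  where "funk_measure \<equiv> busemann_hausdorff funk_F (ball 0 1)"

section \<open>Algebra of the Funk metric\<close>

lemma funk_F_eq:
  "funk_F x y = (sqrt ((norm y)\<^sup>2 * (1 - (norm x)\<^sup>2) + (x \<bullet> y)\<^sup>2) + x \<bullet> y) / (1 - (norm x)\<^sup>2)"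
  unfolding funk_F_def by (simp add: add_divide_distrib algebra_simps)

lemma funk_F_nonneg:
  fixes x y :: "'a::euclidean_space"
  assumes "norm x < 1"
  shows "0 \<le> funk_F x y"
proof -
  have r: "(norm x)\<^sup>2 < 1" using assms by (simp add: abs_square_less_1)
  have "sqrt ((x \<bullet> y)\<^sup>2) \<le> sqrt ((norm y)\<^sup>2 * (1 - (norm x)\<^sup>2) + (x \<bullet> y)\<^sup>2)"
    using r by (intro real_sqrt_le_mono) simp
  hence "0 \<le> sqrt ((norm y)\<^sup>2 * (1 - (norm x)\<^sup>2) + (x \<bullet> y)\<^sup>2) + x \<bullet> y" by simp
  thus ?thesis unfolding funk_F_eq using r by simp
qed

lemma funk_F_ge_radial:
  fixes x y :: "'a::euclidean_space"
  assumes "norm x < 1"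
  shows "(sgn x \<bullet> y) / (1 - norm x) \<le> funk_F x y"
proof (cases "x = 0")
  case True
  thus ?thesis using funk_F_nonneg[OF assms] by simp
next
  case False
  define r where "r = norm x"
  define a where "a = x \<bullet> y"
  define b where "b = (norm y)\<^sup>2"
  have r: "0 < r" "r < 1" using assms False r_def by auto
  have d: "0 < 1 - r\<^sup>2" using r by (simp add: abs_square_less_1)
  have "a\<^sup>2 \<le> r\<^sup>2 * b"
    unfolding a_def r_def b_def by (metis Cauchy_Schwarz_ineq power2_norm_eq_inner)
  hence "a\<^sup>2 / r\<^sup>2 \<le> b" using r by (simp add: divide_le_eq mult.commute)
  hence "a\<^sup>2 / r\<^sup>2 * (1 - r\<^sup>2) \<le> b * (1 - r\<^sup>2)" using d by (intro mult_right_mono) auto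
  moreover have "(a/r)\<^sup>2 - a\<^sup>2 = a\<^sup>2 / r\<^sup>2 * (1 - r\<^sup>2)" using r by (simp add: power_divide field_simps)
  ultimately have "a/r \<le> sqrt (b * (1 - r\<^sup>2) + a\<^sup>2)" by (intro real_le_rsqrt) simp
  hence num: "a/r + a \<le> sqrt (b * (1 - r\<^sup>2) + a\<^sup>2) + a" by simp
  have "(sgn x \<bullet> y) / (1 - norm x) = a / (r * (1 - r))"
    using r unfolding a_def r_def by (simp add: sgn_div_norm field_simps)
  also have "\<dots> = (a/r + a) / (1 - r\<^sup>2)"
  proof -
    have "a/r + a = a * (1 + r) / r" using r by (simp add: field_simps)
    moreover have "1 - r\<^sup>2 = (1 - r) * (1 + r)" by (simp add: power2_eq_square algebra_simps)
    moreover have "a * (1 + r) / r / ((1 - r) * (1 + r)) = a / (r * (1 - r))"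
      using r by (simp add: divide_divide_eq_left mult.commute mult.left_commute)
    ultimately show ?thesis by simp
  qed
  also have "\<dots> \<le> funk_F x y"
    unfolding funk_F_eq a_def[symmetric] b_def[symmetric] r_def[symmetric]
    using num d by (simp add: divide_right_mono)
  finally show ?thesis .
qed

lemma funk_F_less_1_iff:
  fixes x y :: "'a::euclidean_space"
  assumes "norm x < 1"
  shows "funk_F x y < 1 \<longleftrightarrow> norm (x + y) < 1"
proof -
  define r2 where "r2 = (norm x)\<^sup>2"
  define a where "a = x \<bullet> y"
  define b where "b = (norm y)\<^sup>2"
  have r: "0 \<le> r2" "r2 < 1" using assms r2_def by (auto simp: abs_square_less_1)
  have b0: "b \<ge> 0" unfolding b_def by simp
  have q: "0 \<le> b * (1 - r2) + a\<^sup>2" using r b0 by simp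
  have "funk_F x y < 1 \<longleftrightarrow> sqrt (b * (1 - r2) + a\<^sup>2) < 1 - r2 - a"
    unfolding funk_F_eq r2_def[symmetric] a_def[symmetric] b_def[symmetric]
    using r by (simp add: divide_less_eq_1 algebra_simps)
  also have "\<dots> \<longleftrightarrow> r2 + 2*a + b < 1"
  proof
    assume h: "sqrt (b * (1 - r2) + a\<^sup>2) < 1 - r2 - a"
    hence p: "1 - r2 - a > 0" using real_sqrt_ge_zero[OF q] by linarith
    have "b * (1 - r2) + a\<^sup>2 < (1 - r2 - a)\<^sup>2"
      using h q p by (metis real_sqrt_less_iff real_sqrt_unique less_eq_real_def)
    hence "b * (1 - r2) < (1 - r2) * (1 - r2 - 2*a)" by (simp add: power2_eq_square algebra_simps)
    thus "r2 + 2*a + b < 1" using r by (simp add: mult.commute)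
  next
    assume h: "r2 + 2*a + b < 1"
    have p: "1 - r2 - a > 0" using h b0 r by linarith
    have "b * (1 - r2) < (1 - r2) * (1 - r2 - 2*a)" using h r by (simp add: mult.commute)
    hence "b * (1 - r2) + a\<^sup>2 < (1 - r2 - a)\<^sup>2" by (simp add: power2_eq_square algebra_simps)
    thus "sqrt (b * (1 - r2) + a\<^sup>2) < 1 - r2 - a" using p q
      by (metis real_sqrt_less_mono real_sqrt_abs abs_of_pos)
  qed
  also have "r2 + 2*a + b = (norm (x + y))\<^sup>2"
    unfolding r2_def a_def b_def
    by (simp add: power2_norm_eq_inner inner_add algebra_simps inner_commute)
  also have "\<dots> < 1 \<longleftrightarrow> norm (x + y) < 1"
    by (metis abs_square_less_1 abs_norm_cancel)
  finally show ?thesis .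
qed

lemma funk_indicatrix:
  fixes x :: "'a::euclidean_space"
  assumes "norm x < 1"
  shows "{y. funk_F x y < 1} = ball (- x) 1"
proof -
  have "norm (x + y) = dist (- x) y" for y :: 'a
    using norm_minus_cancel[of "x + y"] by (simp add: dist_norm)
  thus ?thesis using funk_F_less_1_iff[OF assms] by auto
qed

lemma funk_F_ray:
  fixes x :: "'a::euclidean_space"
  assumes "0 \<le> t" "t * norm x < 1"
  shows "funk_F (t *\<^sub>R x) x = norm x / (1 - t * norm x)"
proof -
  have p: "0 < 1 + t * norm x" using assms by (simp add: add_pos_nonneg)
  have "sqrt ((norm x)\<^sup>2 * (1 - (t * norm x)\<^sup>2) + (t * (norm x)\<^sup>2)\<^sup>2) = norm x"
    by (simp add: power2_eq_square algebra_simps)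
  hence "funk_F (t *\<^sub>R x) x = (norm x + t * (norm x)\<^sup>2) / (1 - (t * norm x)\<^sup>2)"
    unfolding funk_F_eq using assms by (simp add: power2_norm_eq_inner power_mult_distrib)
  also have "\<dots> = norm x * (1 + t * norm x) / ((1 - t * norm x) * (1 + t * norm x))"
    by (simp add: power2_eq_square algebra_simps)
  also have "\<dots> = norm x / (1 - t * norm x)" using p by simp
  finally show ?thesis .
qed

section \<open>Distance from the origin\<close>

definition funk_potential :: "'a::real_normed_vector \<Rightarrow> real" where
  "funk_potential x = - ln (1 - norm x)"

lemma funk_potential_nonneg: "norm x < 1 \<Longrightarrow> 0 \<le> funk_potential x"
  unfolding funk_potential_def by (simp add: ln_le_zero_iff)

lemma funk_potential_less_iff:
  "norm x < 1 \<and> funk_potential x < \<rho> \<longleftrightarrow> norm x < 1 - exp (- \<rho>)"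
proof
  assume h: "norm x < 1 \<and> funk_potential x < \<rho>"
  hence "- \<rho> < ln (1 - norm x)" unfolding funk_potential_def by simp
  hence "exp (- \<rho>) < exp (ln (1 - norm x))" by simp
  thus "norm x < 1 - exp (- \<rho>)" using h by simp
next
  assume h: "norm x < 1 - exp (- \<rho>)"
  hence x1: "norm x < 1" using exp_gt_zero[of "- \<rho>"] by linarith
  have "ln (exp (- \<rho>)) < ln (1 - norm x)" using h x1 by (subst ln_less_cancel_iff) auto
  thus "norm x < 1 \<and> funk_potential x < \<rho>" using x1 by (simp add: funk_potential_def)
qed

lemma has_real_derivative_funk_potential:
  fixes g :: "real \<Rightarrow> 'a::euclidean_space"
  assumes g: "(g has_vector_derivative D) (at t)" and "g t \<noteq> 0" "norm (g t) < 1"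
  shows "((\<lambda>t. funk_potential (g t)) has_real_derivative (sgn (g t) \<bullet> D) / (1 - norm (g t))) (at t)"
proof -
  have "((\<lambda>t. norm (g t)) has_derivative (\<lambda>s. sgn (g t) \<bullet> (s *\<^sub>R D))) (at t)"
    using has_derivative_compose[OF g[unfolded has_vector_derivative_def] has_derivative_norm]
      assms(2) by (simp add: o_def inner_commute)
  hence norm': "((\<lambda>t. norm (g t)) has_real_derivative (sgn (g t) \<bullet> D)) (at t)"
    unfolding has_field_derivative_def by (rule has_derivative_eq_rhs) (auto simp: fun_eq_iff)
  have "((\<lambda>t. - ln (1 - norm (g t))) has_real_derivative
            - ((1 / (1 - norm (g t))) * (0 - sgn (g t) \<bullet> D))) (at t)"
    by (rule derivative_eq_intros norm' | use assms(3) in simp)+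
  thus ?thesis unfolding funk_potential_def by (simp add: divide_simps)
qed

text \<open>The potential is not differentiable where the curve passes through the origin, so the
  fundamental theorem of calculus is only applied after the last such time.\<close>
lemma last_zero_on_interval:
  fixes g :: "real \<Rightarrow> 'a::real_normed_vector"
  assumes "continuous_on {a..b} g" "a \<le> b"
  obtains s where "s \<in> {a..b}" "s = a \<or> g s = 0" "\<And>t. s < t \<Longrightarrow> t \<le> b \<Longrightarrow> g t \<noteq> 0"
proof (cases "\<exists>t\<in>{a..b}. g t = 0")
  case False
  thus ?thesis using that[of a] assms(2) by auto
next
  case True
  define Z where "Z = {t \<in> {a..b}. g t = 0}"
  have "closed Z" unfolding Z_def by (rule continuous_closed_preimage_constant[OF assms(1)]) auto
  moreover have "Z \<noteq> {}" "bdd_above Z" using True unfolding Z_def by (auto intro: bdd_aboveI[of _ b])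
  ultimately have Sup: "Sup Z \<in> Z" by (intro closed_contains_Sup)
  show ?thesis
  proof (rule that[of "Sup Z"])
    show "Sup Z \<in> {a..b}" "Sup Z = a \<or> g (Sup Z) = 0" using Sup by (auto simp: Z_def)
    show "g t \<noteq> 0" if "Sup Z < t" "t \<le> b" for t
      using that Sup cSup_upper[OF _ \<open>bdd_above Z\<close>, of t] by (force simp: Z_def)
  qed
qed

lemma funk_length_ge_potential_increase_nonzero:
  fixes g :: "real \<Rightarrow> 'a::euclidean_space"
  assumes vp: "valid_path g" and im: "path_image g \<subseteq> ball 0 1"
    and int: "(\<lambda>t. funk_F (g t) (vector_derivative g (at t))) integrable_on {s..1}"
    and s: "0 \<le> s" "s \<le> 1" and nz: "\<And>t. s < t \<Longrightarrow> t \<le> 1 \<Longrightarrow> g t \<noteq> 0"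
  shows "funk_potential (g 1) - funk_potential (g s)
           \<le> integral {s..1} (\<lambda>t. funk_F (g t) (vector_derivative g (at t)))"
proof -
  define f where "f t = funk_F (g t) (vector_derivative g (at t))" for t
  obtain S where S: "finite S" "g C1_differentiable_on {0..1} - S" and cg: "continuous_on {0..1} g"
    using vp unfolding valid_path_def piecewise_C1_differentiable_on_def by blast
  obtain D where D: "\<And>t. t \<in> {0..1} - S \<Longrightarrow> (g has_vector_derivative D t) (at t)"
    using S(2) unfolding C1_differentiable_on_def by blast
  have inb: "t \<in> {0..1} \<Longrightarrow> norm (g t) < 1" for t
    using im unfolding path_image_def image_subset_iff by auto
  define h where
    "h t = (if t \<in> {s<..<1} - S then (sgn (g t) \<bullet> D t) / (1 - norm (g t)) else f t)" for t
  have "((\<lambda>t. funk_potential (g t)) has_vector_derivative h t) (at t)" if t: "t \<in> {s<..<1} - S" for t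
    using has_real_derivative_funk_potential[OF D nz inb] t s
    by (simp add: h_def has_real_derivative_iff_has_vector_derivative)
  moreover have "continuous_on {s..1} (\<lambda>t. funk_potential (g t))"
  proof -
    have "continuous_on {s..1} g" using s by (intro continuous_on_subset[OF cg]) auto
    moreover have "1 - norm (g t) \<noteq> 0" if "t \<in> {s..1}" for t using inb[of t] that s by auto
    ultimately show ?thesis unfolding funk_potential_def by (intro continuous_intros) auto
  qed
  ultimately have FTC: "(h has_integral (funk_potential (g 1) - funk_potential (g s))) {s..1}"
    by (intro fundamental_theorem_of_calculus_interior_strong[OF S(1) s(2)])
  have le: "h t \<le> f t" if "t \<in> {s..1}" for t
  proof (cases "t \<in> {s<..<1} - S")
    case True
    hence "vector_derivative g (at t) = D t" using s D by (intro vector_derivative_at) auto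
    thus ?thesis using True s funk_F_ge_radial[OF inb] by (simp add: h_def f_def)
  qed (auto simp: h_def)
  show ?thesis
    using has_integral_le[OF FTC integrable_integral[OF int[folded f_def]] le] by (simp add: f_def)
qed

lemma funk_length_ge_potential_increase:
  fixes g :: "real \<Rightarrow> 'a::euclidean_space"
  assumes vp: "valid_path g" and im: "path_image g \<subseteq> ball 0 1"
    and int: "(\<lambda>t. funk_F (g t) (vector_derivative g (at t))) integrable_on {0..1}"
  shows "funk_potential (pathfinish g) - funk_potential (pathstart g) \<le> finsler_length funk_F g"
proof -
  define f where "f t = funk_F (g t) (vector_derivative g (at t))" for t
  have inb: "t \<in> {0..1} \<Longrightarrow> norm (g t) < 1" for t
    using im unfolding path_image_def image_subset_iff by auto
  have "continuous_on {0..1} g" using vp valid_path_imp_path unfolding path_def by blast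
  then obtain s where s: "s \<in> {0..1}" "s = 0 \<or> g s = 0" "\<And>t. s < t \<Longrightarrow> t \<le> 1 \<Longrightarrow> g t \<noteq> 0"
    using last_zero_on_interval zero_le_one by blast
  have "funk_potential (g s) \<le> funk_potential (g 0)"
    using s(2) funk_potential_nonneg[OF inb[of 0]] by (auto simp: funk_potential_def)
  moreover have int_s: "f integrable_on {s..1}"
    using integrable_on_subinterval[OF int[folded f_def]] s by auto
  have "funk_potential (g 1) - funk_potential (g s) \<le> integral {s..1} f"
    using s unfolding f_def by (intro funk_length_ge_potential_increase_nonzero[OF vp im int_s[unfolded f_def]]) auto
  moreover have "integral {s..1} f \<le> integral {0..1} f"
  proof (rule integral_subset_le)
    show "\<forall>t\<in>{0..1}. 0 \<le> f t" using inb funk_F_nonneg unfolding f_def by blast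
  qed (use s int_s int[folded f_def] in auto)
  ultimately show ?thesis
    unfolding finsler_length_def f_def pathstart_def pathfinish_def by linarith
qed

lemma funk_linepath_admissible:
  fixes x y :: "'a::euclidean_space"
  assumes "x \<in> ball 0 1" "y \<in> ball 0 1"
  shows "valid_path (linepath x y) \<and> path_image (linepath x y) \<subseteq> ball 0 1 \<and>
    pathstart (linepath x y) = x \<and> pathfinish (linepath x y) = y \<and>
    (\<lambda>t. funk_F (linepath x y t) (vector_derivative (linepath x y) (at t))) integrable_on {0..1}"
proof -
  have im: "path_image (linepath x y) \<subseteq> ball 0 1"
    using assms by (simp add: closed_segment_subset convex_ball)
  have "1 - (norm (linepath x y t))\<^sup>2 \<noteq> 0" if "t \<in> {0..1}" for t
  proof -
    have "linepath x y t \<in> ball 0 1" using im that unfolding path_image_def by blast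
    thus ?thesis using abs_square_less_1[of "norm (linepath x y t)"] by simp
  qed
  hence "continuous_on {0..1} (\<lambda>t. funk_F (linepath x y t) (y - x))"
    unfolding funk_F_def by (intro continuous_intros continuous_on_linepath) auto
  hence "(\<lambda>t. funk_F (linepath x y t) (vector_derivative (linepath x y) (at t))) integrable_on {0..1}"
    by (intro integrable_continuous_interval) simp
  with im show ?thesis by simp
qed

lemma funk_dist_le_length:
  fixes g :: "real \<Rightarrow> 'a::euclidean_space"
  assumes "valid_path g" "path_image g \<subseteq> ball 0 1"
    and "(\<lambda>t. funk_F (g t) (vector_derivative g (at t))) integrable_on {0..1}"
  shows "funk_dist (pathstart g) (pathfinish g) \<le> finsler_length funk_F g"
  unfolding finsler_dist_def using assms
  by (intro cInf_lower bdd_belowI[of _ 0])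
    (auto simp: finsler_length_def path_image_def intro!: integral_nonneg funk_F_nonneg)

lemma funk_dist_ge:
  fixes x y :: "'a::euclidean_space"
  assumes "x \<in> ball 0 1" "y \<in> ball 0 1"
    and "\<And>g. valid_path g \<Longrightarrow> path_image g \<subseteq> ball 0 1 \<Longrightarrow> pathstart g = x \<Longrightarrow> pathfinish g = y
           \<Longrightarrow> (\<lambda>t. funk_F (g t) (vector_derivative g (at t))) integrable_on {0..1}
           \<Longrightarrow> c \<le> finsler_length funk_F g"
  shows "c \<le> funk_dist x y"
  unfolding finsler_dist_def
  using funk_linepath_admissible[OF assms(1,2)] assms(3) by (intro cInf_greatest) blast+

lemma funk_dist_nonneg: "x \<in> ball 0 1 \<Longrightarrow> y \<in> ball 0 1 \<Longrightarrow> 0 \<le> funk_dist x y"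
  by (rule funk_dist_ge)
    (auto simp: finsler_length_def path_image_def intro!: integral_nonneg funk_F_nonneg)

lemma funk_dist_ge_potential_increase:
  "x \<in> ball 0 1 \<Longrightarrow> y \<in> ball 0 1 \<Longrightarrow> funk_potential y - funk_potential x \<le> funk_dist x y"
  by (rule funk_dist_ge) (auto dest: funk_length_ge_potential_increase)

lemma funk_length_ray:
  fixes x :: "'a::euclidean_space"
  assumes x: "norm x < 1"
  shows "finsler_length funk_F (linepath 0 x) = funk_potential x"
proof -
  have p: "t \<in> {0..1} \<Longrightarrow> t * norm x < 1" for t
    using x by (smt (verit) atLeastAtMost_iff mult_left_le_one_le norm_ge_zero)
  have "((\<lambda>t. norm x / (1 - t * norm x)) has_integral
          (- ln (1 - 1 * norm x)) - (- ln (1 - 0 * norm x))) {0..1}"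
  proof (rule fundamental_theorem_of_calculus)
    fix t :: real assume t: "t \<in> {0..1}"
    have "((\<lambda>t. - ln (1 - t * norm x)) has_real_derivative
            - ((1 / (1 - t * norm x)) * (0 - 1 * norm x))) (at t within {0..1})"
      by (rule derivative_eq_intros refl | use p[OF t] in simp)+
    thus "((\<lambda>t. - ln (1 - t * norm x)) has_vector_derivative norm x / (1 - t * norm x))
            (at t within {0..1})"
      by (simp add: has_real_derivative_iff_has_vector_derivative[symmetric])
  qed simp
  moreover have "funk_F (linepath 0 x t) (vector_derivative (linepath 0 x) (at t))
                   = norm x / (1 - t * norm x)" if "t \<in> {0..1}" for t
    using funk_F_ray[OF _ p] that by (simp add: linepath_def)
  ultimately have "((\<lambda>t. funk_F (linepath 0 x t) (vector_derivative (linepath 0 x) (at t)))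
                      has_integral funk_potential x) {0..1}"
    by (subst has_integral_cong) (auto simp: funk_potential_def)
  thus ?thesis unfolding finsler_length_def by (simp add: integral_unique)
qed

lemma funk_dist_from_origin:
  fixes x :: "'a::euclidean_space"
  assumes x: "x \<in> ball 0 1"
  shows "funk_dist 0 x = funk_potential x"
proof (rule antisym)
  show "funk_dist 0 x \<le> funk_potential x"
    using funk_dist_le_length[of "linepath 0 x"] funk_linepath_admissible[of 0 x]
      funk_length_ray[of x] x by simp
  show "funk_potential x \<le> funk_dist 0 x"
    using funk_dist_ge_potential_increase[of 0 x] x by (simp add: funk_potential_def)
qed

lemma fball_funk_origin:
  "fball funk_dist (ball 0 1) (0::'a::euclidean_space) \<rho> = ball 0 (1 - exp (- \<rho>))"
proof -
  have "y \<in> ball 0 1 \<and> funk_dist 0 y < \<rho> \<longleftrightarrow> norm y < 1 - exp (- \<rho>)" for y :: 'a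
    using funk_dist_from_origin[of y] funk_potential_less_iff[of y \<rho>] by auto
  thus ?thesis unfolding fball_def by auto
qed

section \<open>Measure and area of forward balls\<close>

lemma unit_ball_vol_eq: "unit_ball_vol TYPE('a::euclidean_space) = Ball_Volume.unit_ball_vol (real DIM('a))"
  unfolding unit_ball_vol_def by (simp add: content_ball)

lemma unit_ball_vol_pos: "0 < unit_ball_vol TYPE('a::euclidean_space)"
  unfolding unit_ball_vol_eq by (rule Ball_Volume.unit_ball_vol_pos) simp

lemma emeasure_ball_unit_ball_vol:
  "0 \<le> r \<Longrightarrow> emeasure lborel (ball (0::'a::euclidean_space) r) = ennreal (unit_ball_vol TYPE('a) * r ^ DIM('a))"
  unfolding unit_ball_vol_eq by (simp add: emeasure_ball)

lemma emeasure_ball_diff_ball: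
  fixes r s :: real
  assumes "0 \<le> r" "r \<le> s"
  shows "emeasure lborel (ball (0::'a::euclidean_space) s - ball 0 r)
           = ennreal (unit_ball_vol TYPE('a) * (s ^ DIM('a) - r ^ DIM('a)))"
proof -
  have "emeasure lborel (ball (0::'a) s - ball 0 r) = emeasure lborel (ball (0::'a) s) - emeasure lborel (ball (0::'a) r)"
    using assms by (intro emeasure_Diff) (auto simp: emeasure_ball)
  also have "\<dots> = ennreal (unit_ball_vol TYPE('a) * s ^ DIM('a) - unit_ball_vol TYPE('a) * r ^ DIM('a))"
    using assms unit_ball_vol_pos[where 'a='a]
    by (simp add: emeasure_ball_unit_ball_vol ennreal_minus power_mono)
  finally show ?thesis by (simp add: right_diff_distrib)
qed

lemma funk_measure_eq_lebesgue:
  "funk_measure = density lborel (indicator (ball (0::'a::euclidean_space) 1))"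
proof -
  have "emeasure lborel {y. funk_F x y < 1} = emeasure lborel (ball (0::'a) 1)" if "norm x < 1" for x :: 'a
    using funk_indicatrix[OF that] by (simp add: emeasure_ball)
  moreover have "emeasure lborel (ball (0::'a) 1) / emeasure lborel (ball (0::'a) 1) = 1"
    using unit_ball_vol_pos[where 'a='a]
    by (simp add: emeasure_ball_unit_ball_vol divide_ennreal)
  ultimately show ?thesis
    unfolding busemann_hausdorff_def by (intro arg_cong[where f = "density lborel"]) (auto simp: indicator_def)
qed

lemma emeasure_funk_measure:
  fixes A :: "'a::euclidean_space set"
  assumes "A \<in> sets lborel" "A \<subseteq> ball 0 1"
  shows "emeasure funk_measure A = emeasure lborel A"
proof -
  have "emeasure funk_measure A = (\<integral>\<^sup>+x. indicator (ball (0::'a) 1) x * indicator A x \<partial>lborel)"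
    unfolding funk_measure_eq_lebesgue using assms by (subst emeasure_density) (auto intro!: borel_measurable_indicator)
  also have "\<dots> = (\<integral>\<^sup>+x. indicator A x \<partial>lborel)"
    using assms by (intro nn_integral_cong) (auto simp: indicator_def)
  finally show ?thesis using assms by simp
qed

lemma Limsup_difference_quotient:
  fixes G :: "real \<Rightarrow> real"
  assumes "(G has_real_derivative D) (at x)"
    and "\<And>\<delta>. 0 < \<delta> \<Longrightarrow> f \<delta> = ereal ((G (x + \<delta>) - G x) / \<delta>)"
  shows "Limsup (at_right 0) f = ereal D"
proof -
  have "((\<lambda>\<delta>. (G (x + \<delta>) - G x) / \<delta>) \<longlongrightarrow> D) (at_right 0)"
    using DERIV_D[OF assms(1)] by (rule filterlim_mono) (auto simp: at_within_le_at)
  hence "Limsup (at_right 0) (\<lambda>\<delta>. ereal ((G (x + \<delta>) - G x) / \<delta>)) = ereal D"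
    by (intro lim_imp_Limsup) simp_all
  moreover have "\<forall>\<^sub>F \<delta> in at_right 0. (0::real) < \<delta>" by (simp add: eventually_at_right_less)
  hence "\<forall>\<^sub>F \<delta> in at_right 0. f \<delta> = ereal ((G (x + \<delta>) - G x) / \<delta>)"
    by (rule eventually_mono) (rule assms(2))
  ultimately show ?thesis using Limsup_eq by metis
qed

lemma funk_area:
  fixes \<rho> :: real
  assumes "0 < \<rho>"
  shows "area_fn funk_measure funk_dist (ball 0 1) (0::'a::euclidean_space) \<rho>
           = ereal (real DIM('a) * unit_ball_vol TYPE('a) * (1 - exp (- \<rho>)) ^ (DIM('a) - 1) * exp (- \<rho>))"
  unfolding area_fn_def
proof (rule Limsup_difference_quotient)
  let ?G = "\<lambda>\<rho>. unit_ball_vol TYPE('a) * (1 - exp (- \<rho>)) ^ DIM('a)"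
  show "(?G has_real_derivative
          real DIM('a) * unit_ball_vol TYPE('a) * (1 - exp (- \<rho>)) ^ (DIM('a) - 1) * exp (- \<rho>)) (at \<rho>)"
    by (auto intro!: derivative_eq_intros)
  fix \<delta> :: real assume "0 < \<delta>"
  hence radii: "0 \<le> 1 - exp (- \<rho>)" "1 - exp (- \<rho>) \<le> 1 - exp (- (\<rho> + \<delta>))" "1 - exp (- (\<rho> + \<delta>)) < 1"
    using assms by auto
  hence "ball 0 (1 - exp (- (\<rho> + \<delta>))) - ball 0 (1 - exp (- \<rho>)) \<subseteq> ball (0::'a) 1"
    by (intro order.trans[OF Diff_subset] subset_ball) simp
  hence "emeasure funk_measure (fball funk_dist (ball 0 1) (0::'a) (\<rho> + \<delta>) - fball funk_dist (ball 0 1) 0 \<rho>)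
          = ennreal (?G (\<rho> + \<delta>) - ?G \<rho>)"
    unfolding fball_funk_origin using radii
    by (subst emeasure_funk_measure) (auto simp: emeasure_ball_diff_ball right_diff_distrib)
  moreover have "?G \<rho> \<le> ?G (\<rho> + \<delta>)"
    using radii unit_ball_vol_pos[where 'a='a] by (intro mult_left_mono power_mono) auto
  ultimately show "enn2ereal (emeasure funk_measure (fball funk_dist (ball 0 1) (0::'a) (\<rho> + \<delta>)
                     - fball funk_dist (ball 0 1) 0 \<rho>)) / ereal \<delta>
                   = ereal ((?G (\<rho> + \<delta>) - ?G \<rho>) / \<delta>)"
    using \<open>0 < \<delta>\<close> by simp
qed

section \<open>Hypotheses (D) and (BG)\<close>

lemma tendsto_one_minus_exp_div: "((\<lambda>x::real. (1 - exp (- x)) / x) \<longlongrightarrow> 1) (at_right 0)"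
proof -
  have "((\<lambda>x::real. 1 - exp (- x)) has_real_derivative 1) (at 0)"
    by (auto intro!: derivative_eq_intros)
  from DERIV_D[OF this] have "((\<lambda>x::real. (1 - exp (- x)) / x) \<longlongrightarrow> 1) (at 0)" by simp
  thus ?thesis by (rule filterlim_mono) (auto simp: at_within_le_at)
qed

lemma funk_hyp_D:
  "hyp_D DIM('a) (unit_ball_vol TYPE('a)) funk_measure funk_dist (ball 0 1) (0::'a::euclidean_space)"
proof -
  let ?n = "DIM('a)" and ?\<omega> = "unit_ball_vol TYPE('a)"
  let ?q = "\<lambda>\<rho>::real. ((1 - exp (- \<rho>)) / \<rho>) ^ (?n - 1) * exp (- \<rho>)"
  have "\<forall>\<^sub>F \<rho> in at_right 0. (0::real) < \<rho>" by (simp add: eventually_at_right_less)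
  hence ev: "\<forall>\<^sub>F \<rho> in at_right 0. area_fn funk_measure funk_dist (ball 0 1) (0::'a) \<rho>
                / ereal (real ?n * ?\<omega> * \<rho> ^ (?n - 1)) = ereal (?q \<rho>)"
  proof (rule eventually_mono)
    fix \<rho> :: real assume \<rho>: "0 < \<rho>"
    have "real ?n * ?\<omega> * (1 - exp (- \<rho>)) ^ (?n - 1) * exp (- \<rho>) / (real ?n * ?\<omega> * \<rho> ^ (?n - 1)) = ?q \<rho>"
      using \<rho> unit_ball_vol_pos[where 'a='a] by (simp add: power_divide field_simps)
    moreover have "real ?n * ?\<omega> * \<rho> ^ (?n - 1) \<noteq> 0" using \<rho> unit_ball_vol_pos[where 'a='a] by simp
    ultimately show "area_fn funk_measure funk_dist (ball 0 1) (0::'a) \<rho>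
                       / ereal (real ?n * ?\<omega> * \<rho> ^ (?n - 1)) = ereal (?q \<rho>)"
      unfolding funk_area[OF \<rho>] by simp
  qed
  have "((\<lambda>\<rho>::real. exp (- \<rho>)) \<longlongrightarrow> exp (- 0)) (at_right 0)" by (intro tendsto_intros)
  from tendsto_mult[OF tendsto_power[OF tendsto_one_minus_exp_div, of "?n - 1"] this]
  have "(?q \<longlongrightarrow> 1) (at_right 0)" by simp
  hence "((\<lambda>\<rho>. ereal (?q \<rho>)) \<longlongrightarrow> ereal 1) (at_right 0)" by (rule tendsto_ereal)
  hence "Liminf (at_right 0) (\<lambda>\<rho>. ereal (?q \<rho>)) = ereal 1" by (intro lim_imp_Liminf) simp_all
  thus ?thesis unfolding hyp_D_def using Liminf_eq[OF ev] by simp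
qed

lemma sinh_le_mult_cosh:
  fixes x :: real
  assumes "0 \<le> x"
  shows "sinh x \<le> x * cosh x"
proof -
  have "(\<lambda>t. t * cosh t - sinh t) 0 \<le> (\<lambda>t. t * cosh t - sinh t) x"
  proof (rule DERIV_nonneg_imp_nondecreasing[OF assms])
    fix y :: real assume "0 \<le> y" "y \<le> x"
    have "((\<lambda>t. t * cosh t - sinh t) has_real_derivative (y * sinh y)) (at y)"
      by (auto intro!: derivative_eq_intros)
    moreover have "0 \<le> y * sinh y" using \<open>0 \<le> y\<close> by simp
    ultimately show "\<exists>d. ((\<lambda>t. t * cosh t - sinh t) has_real_derivative d) (at y) \<and> 0 \<le> d" by blast
  qed
  thus ?thesis by simp
qed

text \<open>The numerator is concave and the denominator convex, both vanishing at \<open>0\<close>.\<close>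
lemma one_minus_exp_div_sinh_antimono:
  fixes \<kappa> a b :: real
  assumes "0 < \<kappa>" "0 < a" "a \<le> b"
  shows "(1 - exp (- b)) / sinh (\<kappa> * b) \<le> (1 - exp (- a)) / sinh (\<kappa> * a)"
proof (rule DERIV_nonpos_imp_nonincreasing[OF assms(3)])
  fix x :: real assume x: "a \<le> x" "x \<le> b"
  have x0: "0 < x" using x assms by simp
  have s: "0 < sinh (\<kappa> * x)" using assms x0 by simp
  define D where "D = (exp (- x) * sinh (\<kappa> * x) - (1 - exp (- x)) * (cosh (\<kappa> * x) * \<kappa>)) / (sinh (\<kappa> * x))\<^sup>2"
  have "((\<lambda>t. (1 - exp (- t)) / sinh (\<kappa> * t)) has_real_derivative D) (at x)"
    unfolding D_def using s by (auto intro!: derivative_eq_intros simp: power2_eq_square algebra_simps)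
  moreover have "D \<le> 0"
  proof -
    have "x * exp (- x) \<le> 1 - exp (- x)"
    proof -
      have "(1 + x) * exp (- x) \<le> exp x * exp (- x)" by (intro mult_right_mono) auto
      thus ?thesis by (simp add: exp_minus_inverse algebra_simps)
    qed
    moreover have "exp (- x) * sinh (\<kappa> * x) \<le> exp (- x) * ((\<kappa> * x) * cosh (\<kappa> * x))"
      using sinh_le_mult_cosh[of "\<kappa> * x"] assms x0 by (intro mult_left_mono) auto
    ultimately have "exp (- x) * sinh (\<kappa> * x) \<le> (1 - exp (- x)) * (cosh (\<kappa> * x) * \<kappa>)"
      using assms by (smt (verit) mult.commute mult.left_commute mult_right_mono cosh_real_pos)
    thus ?thesis unfolding D_def by (simp add: divide_nonpos_nonneg)
  qed
  ultimately show "\<exists>y. ((\<lambda>t. (1 - exp (- t)) / sinh (\<kappa> * t)) has_real_derivative y) (at x) \<and> y \<le> 0"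
    by blast
qed

lemma funk_hyp_BG:
  assumes \<kappa>: "0 < \<kappa>"
  shows "hyp_BG DIM('a) \<kappa> funk_measure funk_dist (ball 0 1) (0::'a::euclidean_space)"
proof -
  let ?n = "DIM('a)" and ?\<omega> = "unit_ball_vol TYPE('a)"
  define q where "q \<rho> = (1 - exp (- \<rho>)) / sinh (\<kappa> * \<rho>)" for \<rho>
  have area: "area_fn funk_measure funk_dist (ball 0 1) (0::'a) \<rho> / ereal (sinh (\<kappa> * \<rho>) ^ (?n - 1))
                = ereal (real ?n * ?\<omega> * q \<rho> ^ (?n - 1) * exp (- \<rho>))" if \<rho>: "0 < \<rho>" for \<rho>
  proof -
    have s: "0 < sinh (\<kappa> * \<rho>)" using \<kappa> \<rho> by simp
    have "sinh (\<kappa> * \<rho>) ^ (?n - 1) \<noteq> 0" using s \<kappa> \<rho> by simp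
    hence "area_fn funk_measure funk_dist (ball 0 1) (0::'a) \<rho> / ereal (sinh (\<kappa> * \<rho>) ^ (?n - 1))
            = ereal (real ?n * ?\<omega> * (1 - exp (- \<rho>)) ^ (?n - 1) * exp (- \<rho>) / sinh (\<kappa> * \<rho>) ^ (?n - 1))"
      by (simp only: funk_area[OF \<rho>] ereal_divide if_False)
    also have "real ?n * ?\<omega> * (1 - exp (- \<rho>)) ^ (?n - 1) * exp (- \<rho>) / sinh (\<kappa> * \<rho>) ^ (?n - 1)
                 = real ?n * ?\<omega> * q \<rho> ^ (?n - 1) * exp (- \<rho>)"
      unfolding q_def using s by (simp add: power_divide field_simps)
    finally show ?thesis .
  qed
  show ?thesis unfolding hyp_BG_def
  proof (intro allI impI)
    fix \<rho>1 \<rho>2 :: real assume \<rho>: "0 < \<rho>1 \<and> \<rho>1 \<le> \<rho>2"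
    have "0 \<le> q \<rho>2" unfolding q_def using \<rho> \<kappa> by (intro divide_nonneg_pos) auto
    moreover have "q \<rho>2 \<le> q \<rho>1" unfolding q_def using one_minus_exp_div_sinh_antimono \<kappa> \<rho> by blast
    ultimately have "q \<rho>2 ^ (?n - 1) * exp (- \<rho>2) \<le> q \<rho>1 ^ (?n - 1) * exp (- \<rho>1)"
      using \<rho> by (intro mult_mono power_mono) auto
    hence "real ?n * ?\<omega> * q \<rho>2 ^ (?n - 1) * exp (- \<rho>2) \<le> real ?n * ?\<omega> * q \<rho>1 ^ (?n - 1) * exp (- \<rho>1)"
      using unit_ball_vol_pos[where 'a='a] by (simp add: mult.assoc mult_left_mono)
    thus "area_fn funk_measure funk_dist (ball 0 1) (0::'a) \<rho>2 / ereal (sinh (\<kappa> * \<rho>2) ^ (?n - 1))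
           \<le> area_fn funk_measure funk_dist (ball 0 1) (0::'a) \<rho>1 / ereal (sinh (\<kappa> * \<rho>1) ^ (?n - 1))"
      using \<rho> area[of \<rho>1] area[of \<rho>2] by simp
  qed
qed

section \<open>Vanishing of the first eigenvalue\<close>

lemma le_Limsup_at_within:
  fixes f :: "'a::metric_space \<Rightarrow> 'b::complete_linorder"
  assumes "x islimpt {y \<in> A. c \<le> f y}"
  shows "c \<le> Limsup (at x within A) f"
  unfolding Limsup_def
proof (rule INF_greatest, clarify)
  fix P assume "eventually P (at x within A)"
  then obtain d where d: "0 < d" "\<forall>y\<in>A. y \<noteq> x \<and> dist y x < d \<longrightarrow> P y"
    unfolding eventually_at by blast
  obtain y where "y \<in> A" "c \<le> f y" "y \<noteq> x" "dist y x < d"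
    using assms d(1) unfolding islimpt_approachable by blast
  with d show "c \<le> (SUP y\<in>{y. P y}. f y)" by (intro SUP_upper2[of y]) auto
qed

lemma metric_grad_nonneg:
  fixes x :: "'a::metric_space"
  assumes "x islimpt {y \<in> \<Omega>. u y = u x}"
  shows "0 \<le> metric_grad d \<Omega> u x"
  unfolding metric_grad_def
  by (rule le_Limsup_at_within, rule islimpt_subset[OF assms]) auto

lemma metric_grad_le:
  assumes "\<And>y. y \<in> \<Omega> \<Longrightarrow> (u y - u x) / d x y \<le> c"
  shows "metric_grad d \<Omega> u x \<le> ereal c"
  unfolding metric_grad_def
  by (rule Limsup_bounded) (simp add: assms eventually_at_filter)

definition cutoff :: "real \<Rightarrow> real \<Rightarrow> real" where
  "cutoff S t = max 0 (min 1 (2 - t / S))"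

lemma cutoff_antimono: "0 < S \<Longrightarrow> a \<le> b \<Longrightarrow> cutoff S b \<le> cutoff S a"
  unfolding cutoff_def by (intro max.mono min.mono) (auto simp: divide_right_mono)

lemma cutoff_lipschitz: "0 < S \<Longrightarrow> \<bar>cutoff S a - cutoff S b\<bar> \<le> \<bar>a - b\<bar> / S"
proof -
  assume S: "0 < S"
  have "(2 - a / S) - (2 - b / S) = (b - a) / S" by (simp add: diff_divide_distrib)
  hence "\<bar>(2 - a / S) - (2 - b / S)\<bar> = \<bar>a - b\<bar> / S" using S by (simp add: abs_divide abs_minus_commute)
  moreover have "\<bar>max 0 (min 1 p) - max 0 (min 1 q)\<bar> \<le> \<bar>p - q\<bar>" for p q :: real
    by (simp add: max_def min_def abs_if)
  ultimately show ?thesis unfolding cutoff_def by metis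
qed

lemma cutoff_eq_1: "0 < S \<Longrightarrow> t \<le> S \<Longrightarrow> cutoff S t = 1"
  unfolding cutoff_def by (simp add: divide_le_eq_1 max_def min_def)

lemma cutoff_eq_0: "0 < S \<Longrightarrow> 2 * S \<le> t \<Longrightarrow> cutoff S t = 0"
proof -
  assume "0 < S" "2 * S \<le> t"
  hence "2 \<le> t / S" by (simp add: le_divide_eq)
  thus ?thesis unfolding cutoff_def by (simp add: max_def min_def)
qed

text \<open>The norm is truncated at the radius \<open>1 - e\<^sup>-\<^sup>2\<^sup>S\<close> of the forward ball beyond which the
  cutoff vanishes anyway; this makes the function globally Lipschitz. The sign is chosen so that
  the function increases with \<open>\<psi>\<close>: its difference quotients along the non-symmetric distance are
  then controlled by the forward bound \<open>d\<^sub>F(x,y) \<ge> \<psi>(y) - \<psi>(x)\<close> alone.\<close>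
definition funk_test_fn :: "real \<Rightarrow> 'a::real_normed_vector \<Rightarrow> real" where
  "funk_test_fn S x = - cutoff S (- ln (1 - min (norm x) (1 - exp (- (2 * S)))))"

lemma funk_test_fn_eq:
  assumes S: "0 < S" and x: "norm x < 1"
  shows "funk_test_fn S x = - cutoff S (funk_potential x)"
proof (cases "norm x \<le> 1 - exp (- (2 * S))")
  case False
  hence "ln (1 - norm x) < ln (exp (- (2 * S)))" using x by (subst ln_less_cancel_iff) auto
  hence "2 * S \<le> funk_potential x" unfolding funk_potential_def by simp
  thus ?thesis unfolding funk_test_fn_def using False cutoff_eq_0[OF S] by (simp add: min_def)
qed (simp add: funk_test_fn_def funk_potential_def)

lemma funk_test_fn_eq_0:
  assumes "0 < S" "1 - exp (- (2 * S)) \<le> norm x"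
  shows "funk_test_fn S x = 0"
  using assms cutoff_eq_0 unfolding funk_test_fn_def by (simp add: min_def)

lemma funk_test_fn_near_origin:
  assumes S: "1 \<le> S" and x: "norm x \<le> 1/2"
  shows "funk_test_fn S x = -1"
proof -
  have "ln (1/2) \<le> ln (1 - norm x)" using x by (subst ln_le_cancel_iff) auto
  hence "funk_potential x \<le> ln 2" unfolding funk_potential_def by (simp add: ln_div)
  also have "\<dots> \<le> S" using ln_2_less_1 S by simp
  finally show ?thesis using funk_test_fn_eq[of S x] cutoff_eq_1[of S] S x by simp
qed

lemma ln_one_minus_lipschitz:
  fixes p q R :: real
  assumes "p \<le> R" "q \<le> R" "R < 1"
  shows "\<bar>ln (1 - p) - ln (1 - q)\<bar> \<le> \<bar>p - q\<bar> / (1 - R)"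
proof -
  have *: "ln (1 - p) - ln (1 - q) \<le> \<bar>p - q\<bar> / (1 - R)" if "p \<le> R" "q \<le> R" for p q
  proof -
    have pq: "0 < 1 - p" "0 < 1 - q" using that assms(3) by auto
    have "ln (1 - p) - ln (1 - q) = ln ((1 - p) / (1 - q))" using pq by (simp add: ln_div)
    also have "\<dots> \<le> (1 - p) / (1 - q) - 1" using pq by (intro ln_le_minus_one) simp
    also have "\<dots> = (q - p) / (1 - q)" using pq by (simp add: field_simps)
    also have "\<dots> \<le> \<bar>p - q\<bar> / (1 - q)" using pq by (intro divide_right_mono) auto
    also have "\<dots> \<le> \<bar>p - q\<bar> / (1 - R)" using pq that assms(3) by (intro divide_left_mono) auto
    finally show ?thesis .
  qed
  show ?thesis using *[OF assms(1,2)] *[OF assms(2,1)] by (simp add: abs_le_iff abs_minus_commute)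
qed

lemma funk_test_fn_lipschitz:
  assumes S: "0 < S"
  shows "(exp (2 * S) / S)-lipschitz_on UNIV (funk_test_fn S :: 'a::real_normed_vector \<Rightarrow> real)"
proof (rule lipschitz_onI)
  fix x y :: 'a
  define R where "R = 1 - exp (- (2 * S))"
  define mx where "mx = min (norm x) R"
  define my where "my = min (norm y) R"
  have R: "R < 1" "1 - R = exp (- (2 * S))" unfolding R_def by auto
  have "\<bar>mx - my\<bar> \<le> \<bar>norm x - norm y\<bar>" unfolding mx_def my_def by (simp add: min_def abs_if)
  also have "\<dots> \<le> dist x y" by (simp add: dist_norm norm_triangle_ineq3)
  finally have mxy: "\<bar>mx - my\<bar> \<le> dist x y" .
  have "\<bar>ln (1 - mx) - ln (1 - my)\<bar> \<le> \<bar>mx - my\<bar> / (1 - R)"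
    using R(1) by (intro ln_one_minus_lipschitz) (auto simp: mx_def my_def)
  also have "\<dots> \<le> dist x y / (1 - R)" using mxy R(1) by (simp add: divide_right_mono)
  also have "\<dots> = dist x y * exp (2 * S)" unfolding R(2) by (simp add: exp_minus divide_inverse)
  finally have lnxy: "\<bar>ln (1 - mx) - ln (1 - my)\<bar> \<le> dist x y * exp (2 * S)" .
  have "\<bar>cutoff S (- ln (1 - mx)) - cutoff S (- ln (1 - my))\<bar> \<le> \<bar>ln (1 - mx) - ln (1 - my)\<bar> / S"
    using cutoff_lipschitz[OF S, of "- ln (1 - mx)" "- ln (1 - my)"] by (simp add: abs_minus_commute)
  also have "\<dots> \<le> dist x y * exp (2 * S) / S" using lnxy S by (simp add: divide_right_mono)
  finally have "\<bar>cutoff S (- ln (1 - mx)) - cutoff S (- ln (1 - my))\<bar> \<le> dist x y * exp (2 * S) / S" .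
  thus "dist (funk_test_fn S x) (funk_test_fn S y) \<le> exp (2 * S) / S * dist x y"
    unfolding funk_test_fn_def dist_real_def mx_def my_def R_def by (simp add: mult.commute)
qed (use S in simp)

lemma funk_test_fn_admissible:
  assumes S: "1 \<le> S"
  shows "lip_compact_supp (ball 0 1) (funk_test_fn S :: 'a::euclidean_space \<Rightarrow> real)
           \<and> (\<exists>x\<in>ball (0::'a) 1. funk_test_fn S x \<noteq> 0)"
  unfolding lip_compact_supp_def
proof (intro conjI)
  have S0: "0 < S" using S by simp
  show "\<exists>L. L-lipschitz_on (ball 0 1) (funk_test_fn S :: 'a \<Rightarrow> real)"
    using lipschitz_on_subset[OF funk_test_fn_lipschitz[OF S0]] by blast
  define K where "K = cball (0::'a) (1 - exp (- (2 * S)))"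
  have "K \<subseteq> ball 0 1"
  proof
    fix y assume "y \<in> K"
    thus "y \<in> ball 0 1"
      using exp_gt_zero[of "- (2 * S)"] unfolding K_def mem_cball_0 mem_ball_0 by linarith
  qed
  moreover have "funk_test_fn S x = 0" if "x \<notin> K" for x
    using that S0 by (intro funk_test_fn_eq_0) (auto simp: K_def)
  moreover have "compact K" unfolding K_def by simp
  ultimately show "\<exists>K::'a set. compact K \<and> K \<subseteq> ball 0 1 \<and> (\<forall>x. x \<notin> K \<longrightarrow> funk_test_fn S x = 0)"
    by (intro exI[of _ K]) blast
  show "\<exists>x\<in>ball (0::'a) 1. funk_test_fn S x \<noteq> 0"
    using funk_test_fn_near_origin[OF S, of "0::'a"] by (intro bexI[of _ 0]) auto
qed

lemma funk_test_fn_difference_quotient_le: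
  fixes x y :: "'a::euclidean_space"
  assumes S: "0 < S" and x: "x \<in> ball 0 1" and y: "y \<in> ball 0 1"
  shows "(funk_test_fn S y - funk_test_fn S x) / funk_dist x y \<le> 1 / S"
proof (cases "funk_potential y \<le> funk_potential x")
  case True
  hence "funk_test_fn S y - funk_test_fn S x \<le> 0"
    using x y cutoff_antimono[OF S] by (simp add: funk_test_fn_eq[OF S])
  moreover have "0 \<le> funk_dist x y" using funk_dist_nonneg x y .
  ultimately have "(funk_test_fn S y - funk_test_fn S x) / funk_dist x y \<le> 0"
    by (simp add: divide_nonpos_nonneg)
  also have "\<dots> \<le> 1 / S" using S by simp
  finally show ?thesis .
next
  case False
  have dl: "funk_potential y - funk_potential x \<le> funk_dist x y"
    using funk_dist_ge_potential_increase x y .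
  have "funk_test_fn S y - funk_test_fn S x \<le> \<bar>funk_potential x - funk_potential y\<bar> / S"
    using x y cutoff_lipschitz[OF S, of "funk_potential x" "funk_potential y"]
    by (simp add: funk_test_fn_eq[OF S] abs_le_iff)
  also have "\<dots> \<le> funk_dist x y / S" using False dl S by (simp add: divide_right_mono)
  finally show ?thesis using False dl S by (simp add: divide_le_eq field_simps)
qed

lemma funk_test_fn_slope_le:
  fixes x :: "'a::euclidean_space"
  assumes "0 < S" "x \<in> ball 0 1"
  shows "metric_grad funk_dist (ball 0 1) (funk_test_fn S) x \<le> ereal (1 / S)"
  using assms by (intro metric_grad_le funk_test_fn_difference_quotient_le) auto

text \<open>Nonnegativity uses that spheres are perfect in dimension \<open>\<ge> 2\<close>, on which the test
  functions are constant; it matters because the energy integrates the square of the slope.\<close>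
lemma funk_test_fn_slope_nonneg:
  fixes x :: "'a::euclidean_space"
  assumes dim: "2 \<le> DIM('a)" and S: "1 \<le> S" and x: "x \<in> ball 0 1"
  shows "0 \<le> metric_grad funk_dist (ball 0 1) (funk_test_fn S) x"
proof (rule metric_grad_nonneg)
    show "x islimpt {y \<in> ball 0 1. funk_test_fn S y = funk_test_fn S x}"
    proof (cases "x = 0")
      case True
      have "x islimpt ball x (1/2)" by (simp add: islimpt_ball)
      moreover have "funk_test_fn S y = -1" if "y \<in> ball x (1/2)" for y
        using that True by (intro funk_test_fn_near_origin[OF S]) simp
      hence "ball x (1/2) \<subseteq> {y \<in> ball 0 1. funk_test_fn S y = funk_test_fn S x}"
        using True by auto
      ultimately show ?thesis by (rule islimpt_subset)
    next
      case False
      have "sphere (0::'a) (norm x) \<noteq> {z}" for z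
      proof
        assume "sphere (0::'a) (norm x) = {z}"
        moreover have "x \<in> sphere 0 (norm x)" "- x \<in> sphere 0 (norm x)" by simp_all
        ultimately have "x = z" "- x = z" by blast+
        have "(2::real) *\<^sub>R x = x - (- x)" by (simp add: scaleR_2)
        also have "\<dots> = 0" using \<open>x = z\<close> \<open>- x = z\<close> by simp
        finally show False using False by simp
      qed
      hence "x islimpt sphere 0 (norm x)"
        by (intro connected_imp_perfect connected_sphere dim) simp_all
      moreover have "sphere 0 (norm x) \<subseteq> {y \<in> ball 0 1. funk_test_fn S y = funk_test_fn S x}"
        using x by (auto simp: funk_test_fn_def)
      ultimately show ?thesis by (rule islimpt_subset)
    qed
qed

lemma funk_test_fn_energy_le:
  assumes dim: "2 \<le> DIM('a::euclidean_space)" and S: "1 \<le> S"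
  shows "(\<integral>\<^sup>+x\<in>ball (0::'a) 1. e2ennreal ((metric_grad funk_dist (ball 0 1) (funk_test_fn S) x)\<^sup>2) \<partial>funk_measure)
           \<le> ennreal ((1/S)\<^sup>2 * unit_ball_vol TYPE('a))"
proof -
  have "e2ennreal ((metric_grad funk_dist (ball 0 1) (funk_test_fn S) x)\<^sup>2) \<le> ennreal ((1/S)\<^sup>2)"
    if x: "x \<in> ball (0::'a) 1" for x
  proof -
    obtain v where v: "metric_grad funk_dist (ball 0 1) (funk_test_fn S) x = ereal v" "0 \<le> v" "v \<le> 1/S"
      using funk_test_fn_slope_nonneg[OF dim S x] funk_test_fn_slope_le[of S x] S x by (cases "metric_grad funk_dist (ball 0 1) (funk_test_fn S) x") auto
    have "v\<^sup>2 \<le> (1/S)\<^sup>2" using v by (intro power_mono) auto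
    thus ?thesis unfolding v(1) by (simp add: power2_eq_square ennreal_leI)
  qed
  hence "(\<integral>\<^sup>+x\<in>ball (0::'a) 1. e2ennreal ((metric_grad funk_dist (ball 0 1) (funk_test_fn S) x)\<^sup>2) \<partial>funk_measure)
           \<le> (\<integral>\<^sup>+x. ennreal ((1/S)\<^sup>2) * indicator (ball (0::'a) 1) x \<partial>funk_measure)"
    by (intro nn_integral_mono) (auto simp: indicator_def)
  also have "\<dots> = ennreal ((1/S)\<^sup>2) * emeasure funk_measure (ball (0::'a) 1)"
    by (rule nn_integral_cmult_indicator) (simp add: funk_measure_eq_lebesgue)
  also have "emeasure funk_measure (ball (0::'a) 1) = ennreal (unit_ball_vol TYPE('a))"
    by (simp add: emeasure_funk_measure emeasure_ball_unit_ball_vol)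
  finally show ?thesis using unit_ball_vol_pos[where 'a='a] by (simp add: ennreal_mult)
qed

lemma funk_test_fn_mass_ge:
  assumes S: "1 \<le> S"
  shows "ennreal (unit_ball_vol TYPE('a) * (1/2) ^ DIM('a))
           \<le> (\<integral>\<^sup>+x\<in>ball (0::'a::euclidean_space) 1. ennreal ((funk_test_fn S x)\<^sup>2) \<partial>funk_measure)"
proof -
  have "ennreal (unit_ball_vol TYPE('a) * (1/2) ^ DIM('a)) = emeasure funk_measure (ball (0::'a) (1/2))"
    by (subst emeasure_funk_measure) (auto simp: emeasure_ball_unit_ball_vol)
  also have "\<dots> = (\<integral>\<^sup>+x. indicator (ball (0::'a) (1/2)) x \<partial>funk_measure)"
    by (rule nn_integral_indicator[symmetric]) (simp add: funk_measure_eq_lebesgue)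
  also have "\<dots> \<le> (\<integral>\<^sup>+x\<in>ball (0::'a) 1. ennreal ((funk_test_fn S x)\<^sup>2) \<partial>funk_measure)"
  proof (rule nn_integral_mono)
    fix x :: 'a
    show "indicator (ball 0 (1/2)) x \<le> ennreal ((funk_test_fn S x)\<^sup>2) * indicator (ball 0 1) x"
      using funk_test_fn_near_origin[OF S, of x] by (cases "x \<in> ball 0 (1/2)") (auto simp: indicator_def)
  qed
  finally show ?thesis .
qed

lemma funk_first_eigenvalue_le:
  assumes dim: "2 \<le> DIM('a::euclidean_space)" and S: "1 \<le> S"
  shows "first_eigenvalue funk_dist funk_measure (ball (0::'a) 1) \<le> ennreal (2 ^ DIM('a) / S\<^sup>2)"
proof -
  let ?\<omega> = "unit_ball_vol TYPE('a)"
  define E where "E = (\<integral>\<^sup>+x\<in>ball (0::'a) 1. e2ennreal ((metric_grad funk_dist (ball 0 1) (funk_test_fn S) x)\<^sup>2) \<partial>funk_measure)"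
  define M where "M = (\<integral>\<^sup>+x\<in>ball (0::'a) 1. ennreal ((funk_test_fn S x)\<^sup>2) \<partial>funk_measure)"
  have M: "ennreal (?\<omega> * (1/2) ^ DIM('a)) \<le> M" unfolding M_def by (rule funk_test_fn_mass_ge[OF S])
  have "0 < ennreal (?\<omega> * (1/2) ^ DIM('a))" using unit_ball_vol_pos[where 'a='a] by simp
  hence "0 < M" using M by (rule order.strict_trans2)
  have "(1/S)\<^sup>2 * ?\<omega> = (?\<omega> * (1/2) ^ DIM('a)) * (2 ^ DIM('a) / S\<^sup>2)"
    by (simp add: power_divide field_simps power_mult_distrib[symmetric])
  hence "E \<le> ennreal (?\<omega> * (1/2) ^ DIM('a)) * ennreal (2 ^ DIM('a) / S\<^sup>2)"
    using funk_test_fn_energy_le[OF dim S] unit_ball_vol_pos[where 'a='a]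
    by (simp add: E_def ennreal_mult[symmetric])
  also have "\<dots> \<le> M * ennreal (2 ^ DIM('a) / S\<^sup>2)" using M by (rule mult_right_mono) simp
  finally have "E / M \<le> ennreal (2 ^ DIM('a) / S\<^sup>2)" by (intro divide_le_posI_ennreal \<open>0 < M\<close>)
  thus ?thesis
    unfolding first_eigenvalue_def E_def M_def
    using funk_test_fn_admissible[OF S] by (intro INF_lower2[where i = "funk_test_fn S"]) auto
qed

lemma funk_first_eigenvalue:
  assumes "2 \<le> DIM('a::euclidean_space)"
  shows "first_eigenvalue funk_dist funk_measure (ball (0::'a) 1) = 0"
proof -
  have le: "first_eigenvalue funk_dist funk_measure (ball (0::'a) 1) \<le> ennreal e" if e: "0 < e" for e
  proof -
    define S where "S = max 1 (2 ^ DIM('a) / e)"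
    have S: "1 \<le> S" unfolding S_def by simp
    have "2 ^ DIM('a) / e \<le> S" unfolding S_def by (rule max.cobounded2)
    also have "\<dots> \<le> S\<^sup>2" using S by (simp add: power2_eq_square)
    finally have "2 ^ DIM('a) \<le> S\<^sup>2 * e" using e by (simp add: divide_le_eq)
    hence "2 ^ DIM('a) / S\<^sup>2 \<le> e" using S by (simp add: divide_le_eq mult.commute)
    hence "ennreal (2 ^ DIM('a) / S\<^sup>2) \<le> ennreal e" by (rule ennreal_leI)
    with funk_first_eigenvalue_le[OF assms S] show ?thesis by (rule order.trans)
  qed
  have "first_eigenvalue funk_dist funk_measure (ball (0::'a) 1) \<le> 0"
  proof (rule ennreal_le_epsilon)
    fix e :: real assume "0 < e"
    thus "first_eigenvalue funk_dist funk_measure (ball (0::'a) 1) \<le> 0 + ennreal e"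
      unfolding add_0 by (rule le)
  qed
  thus ?thesis by simp
qed

theorem mainTheorem5:
  assumes "DIM('a::euclidean_space) \<ge> 2"
  shows "(\<forall>\<rho>>0. area_fn (busemann_hausdorff funk_F (ball (0::'a) 1))
                    (finsler_dist funk_F (ball 0 1)) (ball 0 1) 0 \<rho>
              = ereal (real DIM('a) * unit_ball_vol TYPE('a) * (1 - exp (- \<rho>)) ^ (DIM('a) - 1)
                       * exp (- \<rho>)))
       \<and> hyp_D DIM('a) (unit_ball_vol TYPE('a)) (busemann_hausdorff funk_F (ball (0::'a) 1))
           (finsler_dist funk_F (ball 0 1)) (ball 0 1) 0
       \<and> (\<forall>\<kappa>>0. hyp_BG DIM('a) \<kappa> (busemann_hausdorff funk_F (ball (0::'a) 1))
           (finsler_dist funk_F (ball 0 1)) (ball 0 1) 0)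
       \<and> first_eigenvalue (finsler_dist funk_F (ball (0::'a) 1))
           (busemann_hausdorff funk_F (ball 0 1)) (ball 0 1) = 0"
  by (simp add: funk_area funk_hyp_D funk_hyp_BG funk_first_eigenvalue[OF assms])

end
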